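(* Let $i\in\mathbb N$. Every geodesic word in $G'$ (over the generators $a_0^{\pm1},a_1^{\pm1},\dots$) representing an element of the cyclic subgroup $\langle a_i\rangle$ uses only letters $a_j^{\pm1}$ with $j\ge i$.
   Context: Fix an integer $p\ge20$. $G'=\langle a_0,a_1,a_2,\dots\mid a_j^{-1}a_{j-1}a_j=a_{j-1}^p\ (j\ge1)\rangle$, with word metric relative to the generating set $\{a_0,a_1,\dots\}$. A word is geodesic if its length equals the word length of the element it represents. *)

theory Defs
  imports Main
begin

text \<open>Letters: (j, True) is a_j, (j, False) is a_j^-1. Words are lists of letters.\<close>
type_synonym letter = "nat \<times> bool"

definition inv_letter :: "letter \<Rightarrow> letter" where
  "inv_letter x = (fst x, \<not> snd x)"

text \<open>Word equality in G' = < a_0, a_1, ... | a_j^-1 a_(j-1) a_j = a_(j-1)^p (j>=1) >: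
  the congruence on words generated by free cancellation and the defining relations.\<close>
inductive weq :: "nat \<Rightarrow> letter list \<Rightarrow> letter list \<Rightarrow> bool" for p :: nat where
  weq_refl: "weq p u u"
| weq_sym: "weq p u v \<Longrightarrow> weq p v u"
| weq_trans: "weq p u v \<Longrightarrow> weq p v w \<Longrightarrow> weq p u w"
| weq_ctx: "weq p u v \<Longrightarrow> weq p (x @ u @ y) (x @ v @ y)"
| weq_free: "weq p [c, inv_letter c] []"
| weq_rel: "j \<ge> 1 \<Longrightarrow> weq p [(j, False), (j - 1, True), (j, True)] (replicate p (j - 1, True))"

definition gen_pow :: "nat \<Rightarrow> int \<Rightarrow> letter list" where
  "gen_pow i k = (if k \<ge> 0 then replicate (nat k) (i, True) else replicate (nat (- k)) (i, False))"

definition geodesic :: "nat \<Rightarrow> letter list \<Rightarrow> bool" where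
  "geodesic p w \<longleftrightarrow> (\<forall>v. weq p v w \<longrightarrow> length w \<le> length v)"

end

theory Submission
  imports Defs
begin

(* For every i, sending a_j to 1 for j < i and fixing a_j for j >= i
   respects the defining relations of G' (the only relation involving both kinds of
   generators is a_i^-1 a_(i-1) a_i = a_(i-1)^p, which becomes the trivial identity
   a_i^-1 a_i = 1).  On words this retraction is the map erase i deleting every letter
   of index below i; it preserves word equality and fixes every power of a_i.  Hence a
   word w representing a_i^k is equal in G' to erase i w, which is a sub-word of w.
   A geodesic word cannot be equal to a strictly shorter word, so erase i w = w, i.e.
   w has no letter of index below i.  The argument works for every p. *)

definition erase :: "nat \<Rightarrow> letter list \<Rightarrow> letter list" where
  "erase i w = filter (\<lambda>x. fst x \<ge> i) w"

lemma erase_append [simp]: "erase i (u @ v) = erase i u @ erase i v"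
  by (simp add: erase_def)

text \<open>A free cancellation a_j^-1 a_j = 1, needed when the relation at j = i is erased.\<close>
lemma weq_cancel_inv_first: "weq p [(j, False), (j, True)] []"
  using weq.weq_free[of p "(j, False)"] by (simp add: inv_letter_def)

text \<open>Each defining relation is either untouched (indices >= i),
  deleted entirely (indices < i), or turned into a free cancellation (j = i).\<close>
lemma weq_erase: "weq p u v \<Longrightarrow> weq p (erase i u) (erase i v)"
proof (induction rule: weq.induct)
  case (weq_refl u)
  show ?case by (rule weq.weq_refl)
next
  case (weq_sym u v)
  then show ?case by (blast intro: weq.weq_sym)
next
  case (weq_trans u v w)
  then show ?case by (blast intro: weq.weq_trans)
next
  case (weq_ctx u v x y)
  then show ?case by (simp add: weq.weq_ctx)
next
  case (weq_free c)
  then show ?case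
    by (cases "fst c \<ge> i")
       (auto simp: erase_def inv_letter_def weq.weq_free[of p c, unfolded inv_letter_def]
             intro: weq.weq_refl)
next
  case (weq_rel j)
  consider "i \<le> j - 1" | "j = i" | "j < i" using weq_rel by linarith
  then show ?case
  proof cases
    case 1
    then have "erase i [(j, False), (j - 1, True), (j, True)] = [(j, False), (j - 1, True), (j, True)]"
      and "erase i (replicate p (j - 1, True)) = replicate p (j - 1, True)"
      by (auto simp: erase_def)
    then show ?thesis using weq.weq_rel[OF weq_rel] by simp
  next
    case 2
    have "erase i [(j, False), (j - 1, True), (j, True)] = [(j, False), (j, True)]"
      using 2 weq_rel by (auto simp: erase_def)
    moreover have "erase i (replicate p (j - 1, True)) = []"
      using 2 weq_rel by (induct p) (auto simp: erase_def)
    ultimately show ?thesis by (simp add: weq_cancel_inv_first)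
  next
    case 3
    then show ?thesis by (auto simp: erase_def intro: weq.weq_refl)
  qed
qed

lemma erase_gen_pow [simp]: "erase i (gen_pow i k) = gen_pow i k"
  by (simp add: erase_def gen_pow_def)

lemma geodesic_filter_eq:
  assumes "geodesic p w" and "weq p (filter P w) w"
  shows "\<forall>x \<in> set w. P x"
proof -
  have "length w \<le> length (filter P w)"
    using assms unfolding geodesic_def by blast
  then have "length (filter P w) = length w"
    using length_filter_le[of P w] by linarith
  then show ?thesis by (metis filter_id_conv length_filter_less less_irrefl)
qed

theorem lemma5p2:
  fixes p i :: nat and w :: "letter list"
  assumes "p \<ge> 20"
    and "geodesic p w"
    and "\<exists>k::int. weq p w (gen_pow i k)"
  shows "\<forall>x \<in> set w. fst x \<ge> i"
proof -
  obtain k where k: "weq p w (gen_pow i k)" using assms(3) by blast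
  have "weq p (erase i w) (gen_pow i k)"
    using weq_erase[OF k, of i] by simp
  then have "weq p (erase i w) w"
    using weq.weq_trans weq.weq_sym k by blast
  then show ?thesis
    using geodesic_filter_eq[OF assms(2)] by (simp add: erase_def)
qed

end
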